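(* Let $\xi=\xi_{\{\mu\}}$ be a non-trivial GCKV on $\mathbb{E}^2$ with parameters $\mu=(\mu_0,\mu_1,\mu_2)$ and set $\mu_0':=\frac14(2\mu_0\mu_2-\mu_1^2)$. Let $\mathbb{A}_0\in SL(2,\mathbb{C})$ be any element of the form $\mathbb{A}_0=\begin{pmatrix}\frac12(\delta\mu_2-\gamma\mu_1)&\frac12\delta\mu_1-\gamma\mu_0\\ \gamma&\delta\end{pmatrix}$ with $\frac12\delta^2\mu_2-\gamma\delta\mu_1+\gamma^2\mu_0=1$. Then the set of all $\mathbb{A}\in SL(2,\mathbb{C})$ such that $\chi^{\mathbb{A}}_\star(\xi)$ is in canonical form is $\mathbb{A}_{\mu_0'}\cdot\mathbb{A}_0=\{\mathbb{B}\mathbb{A}_0:\mathbb{B}\in\mathbb{A}_{\mu_0'}\}$, where $\mathbb{A}_{c}:=\left\{\begin{pmatrix}\delta'&-\gamma' c\\ \gamma'&\delta'\end{pmatrix}:\delta'^2+c\gamma'^2=1\right\}$.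
   Context: $\mathbb{E}^2$ is the Euclidean plane with Cartesian coordinates $\{x,y\}$ and $z=\frac12(x-iy)$. A GCKV with parameters $\mu\in\mathbb{C}^3$ is $\xi_{\{\mu\}}=(\mu_0+\mu_1z+\frac12\mu_2z^2)\partial_z+(\bar\mu_0+\bar\mu_1\bar z+\frac12\bar\mu_2\bar z^2)\partial_{\bar z}$; it is in canonical form when $\mu_1=0,\mu_2=2$. For $\mathbb{A}=\begin{pmatrix}\alpha&\beta\\ \gamma&\delta\end{pmatrix}\in SL(2,\mathbb{C})$, $\chi^{\mathbb{A}}$ is the Möbius transformation $z\mapsto(\alpha z+\beta)/(\gamma z+\delta)$ of the Riemann sphere and $\chi^{\mathbb{A}}_\star$ denotes push-forward (which maps GCKVs to GCKVs). *)

theory Defs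
  imports "HOL-Analysis.Analysis"
begin

text \<open>Elements of SL(2,C) are represented as quadruples (alpha, beta, gamma, delta)
  standing for the matrix [[alpha, beta],[gamma, delta]].\<close>

type_synonym mat2 = "complex \<times> complex \<times> complex \<times> complex"

definition SL2 :: "mat2 set" where
  "SL2 = {(a, b, c, d). a * d - b * c = 1}"

definition mmul :: "mat2 \<Rightarrow> mat2 \<Rightarrow> mat2" where
  "mmul A B = (case A of (a, b, c, d) \<Rightarrow> case B of (a', b', c', d') \<Rightarrow>
     (a * a' + b * c', a * b' + b * d', c * a' + d * c', c * b' + d * d'))"

definition moebius :: "mat2 \<Rightarrow> complex \<Rightarrow> complex" where
  "moebius A z = (case A of (a, b, c, d) \<Rightarrow> (a * z + b) / (c * z + d))"

definition moeb_den :: "mat2 \<Rightarrow> complex \<Rightarrow> complex" where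
  "moeb_den A z = (case A of (a, b, c, d) \<Rightarrow> c * z + d)"

text \<open>The holomorphic coefficient of the GCKV xi_{mu}: xi = f(z) d_z + conj(f(z)) d_{zbar}
  with f(z) = mu0 + mu1 z + 1/2 mu2 z^2.\<close>
definition gckv_coeff :: "complex \<times> complex \<times> complex \<Rightarrow> complex \<Rightarrow> complex" where
  "gckv_coeff \<mu> z = (case \<mu> of (m0, m1, m2) \<Rightarrow> m0 + m1 * z + m2 * z^2 / 2)"

text \<open>nu are the parameters of the push-forward chi^A_* xi_{mu}: the push-forward of
  f(z) d_z is (chi'(z) f(z)) d_w at w = chi(z) (the d_{zbar} part is its conjugate).\<close>
definition is_pushforward :: "mat2 \<Rightarrow> complex \<times> complex \<times> complex \<Rightarrow> complex \<times> complex \<times> complex \<Rightarrow> bool" where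
  "is_pushforward A \<mu> \<nu> \<longleftrightarrow>
     (\<forall>z. moeb_den A z \<noteq> 0 \<longrightarrow>
        gckv_coeff \<nu> (moebius A z) = deriv (moebius A) z * gckv_coeff \<mu> z)"

definition pushforward_canonical :: "mat2 \<Rightarrow> complex \<times> complex \<times> complex \<Rightarrow> bool" where
  "pushforward_canonical A \<mu> \<longleftrightarrow>
     (\<exists>\<nu>0 \<nu>1 \<nu>2. is_pushforward A \<mu> (\<nu>0, \<nu>1, \<nu>2) \<and> \<nu>1 = 0 \<and> \<nu>2 = 2)"

definition Acal :: "complex \<Rightarrow> mat2 set" where
  "Acal c = {(d', - g' * c, g', d') | d' g'. d'^2 + c * g'^2 = 1}"

end

theory Submission
  imports Defs
begin

text \<open>Push-forward by \<open>\<chi>\<^sup>\<bbbA>\<close> acts on the coefficient polynomial of a GCKV by a substitution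
  of homogeneous coordinates, so the parameters of \<open>\<chi>\<^sup>\<bbbA>\<^sub>\<star>\<xi>\<close> are polynomials in the entries
  of \<open>\<bbbA>\<close> and \<open>\<mu>\<close>, and this action respects matrix multiplication. The condition on
  \<open>\<bbbA>\<^sub>0\<close> says exactly that \<open>\<bbbA>\<^sub>0 \<in> SL(2,\<complex>)\<close> brings \<open>\<xi>\<close> to the canonical field with parameters
  \<open>(\<mu>\<^sub>0', 0, 2)\<close>. Hence \<open>\<bbbA>\<close> brings \<open>\<xi>\<close> to canonical form iff \<open>\<bbbA>\<bbbA>\<^sub>0\<^sup>-\<^sup>1\<close> keeps that
  canonical field in canonical form, and solving these equations under \<open>det = 1\<close> gives
  precisely \<open>\<bbbA>\<^bsub>\<mu>\<^sub>0'\<^esub>\<close>.\<close>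

definition minv :: "mat2 \<Rightarrow> mat2" where
  "minv A = (case A of (a, b, c, d) \<Rightarrow> (d, - b, - c, a))"

lemma mmul_assoc: "mmul (mmul A B) C = mmul A (mmul B C)"
  by (cases A; cases B; cases C) (simp add: mmul_def algebra_simps)

lemma mmul_one_right [simp]: "mmul A (1, 0, 0, 1) = A"
  by (cases A) (simp add: mmul_def)

lemma SL2_mmul:
  assumes "A \<in> SL2" "B \<in> SL2"
  shows "mmul A B \<in> SL2"
proof -
  obtain a b c d a' b' c' d' where "A = (a, b, c, d)" "B = (a', b', c', d')"
    by (cases A; cases B)
  moreover have "(a * a' + b * c') * (c * b' + d * d') - (a * b' + b * d') * (c * a' + d * c') =
      (a * d - b * c) * (a' * d' - b' * c')"
    by algebra
  ultimately show ?thesis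
    using assms by (simp add: SL2_def mmul_def)
qed

lemma SL2_minv: "A \<in> SL2 \<Longrightarrow> minv A \<in> SL2"
  by (cases A) (simp add: SL2_def minv_def algebra_simps)

lemma mmul_minv_right: "A \<in> SL2 \<Longrightarrow> mmul A (minv A) = (1, 0, 0, 1)"
  by (cases A) (simp add: SL2_def minv_def mmul_def algebra_simps)

lemma mmul_minv_left: "A \<in> SL2 \<Longrightarrow> mmul (minv A) A = (1, 0, 0, 1)"
  by (cases A) (simp add: SL2_def minv_def mmul_def algebra_simps)

lemma image_mmul_right_SL2:
  assumes "A0 \<in> SL2" "S \<subseteq> SL2"
  shows "(\<lambda>B. mmul B A0) ` S = {A \<in> SL2. mmul A (minv A0) \<in> S}"
proof (intro set_eqI iffI)
  fix A assume "A \<in> (\<lambda>B. mmul B A0) ` S"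
  then obtain B where "B \<in> S" "A = mmul B A0" by blast
  then show "A \<in> {A \<in> SL2. mmul A (minv A0) \<in> S}"
    using assms by (simp add: SL2_mmul subsetD mmul_assoc mmul_minv_right)
next
  fix A assume "A \<in> {A \<in> SL2. mmul A (minv A0) \<in> S}"
  moreover have "A = mmul (mmul A (minv A0)) A0"
    using assms(1) by (simp add: mmul_assoc mmul_minv_left)
  ultimately show "A \<in> (\<lambda>B. mmul B A0) ` S" by blast
qed

lemma Acal_subset_SL2: "Acal K \<subseteq> SL2"
  by (auto simp: Acal_def SL2_def power2_eq_square algebra_simps)

lemma moebius_has_field_derivative:
  assumes "A \<in> SL2" "moeb_den A z \<noteq> 0"
  shows "(moebius A has_field_derivative 1 / (moeb_den A z)\<^sup>2) (at z)"
proof (cases A)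
  case (fields a b c d)
  have "((\<lambda>z. (a * z + b) / (c * z + d)) has_field_derivative
          (a * (c * z + d) - (a * z + b) * c) / (c * z + d)\<^sup>2) (at z)"
    using assms(2) fields
    by (auto intro!: derivative_eq_intros simp: moeb_den_def power2_eq_square)
  moreover have "a * (c * z + d) - (a * z + b) * c = 1"
    using assms(1) fields by (simp add: SL2_def algebra_simps)
  moreover have "moebius A = (\<lambda>z. (a * z + b) / (c * z + d))"
    using fields by (simp add: fun_eq_iff moebius_def)
  ultimately show ?thesis
    using fields by (simp add: moeb_den_def)
qed

text \<open>The coefficient of the push-forward at \<open>w\<close> is \<open>(a - c w)\<^sup>2 f((d w - b) / (a - c w))\<close>:
  the homogenised \<open>f\<close> at homogeneous coordinates of \<open>(\<chi>\<^sup>\<bbbA>)\<^sup>-\<^sup>1(w)\<close>.\<close>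
definition pushforward_params :: "mat2 \<Rightarrow> complex \<times> complex \<times> complex \<Rightarrow> complex \<times> complex \<times> complex" where
  "pushforward_params A \<mu> = (case A of (a, b, c, d) \<Rightarrow> case \<mu> of (m0, m1, m2) \<Rightarrow>
     (m0 * a^2 - m1 * a * b + m2 * b^2 / 2,
      - 2 * m0 * a * c + m1 * (a * d + b * c) - m2 * b * d,
      2 * m0 * c^2 - 2 * m1 * c * d + m2 * d^2))"

lemma gckv_coeff_pushforward_params:
  "gckv_coeff (pushforward_params (a, b, c, d) (m0, m1, m2)) w =
     m0 * (a - c * w)\<^sup>2 + m1 * (d * w - b) * (a - c * w) + m2 / 2 * (d * w - b)\<^sup>2"
  by (simp add: gckv_coeff_def pushforward_params_def field_simps power2_eq_square)

lemma pushforward_params_mmul: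
  "pushforward_params (mmul B A) \<mu> = pushforward_params B (pushforward_params A \<mu>)"
  by (cases A; cases B; cases \<mu>)
    (simp add: pushforward_params_def mmul_def field_simps power2_eq_square)

lemma is_pushforward_pushforward_params:
  assumes "A \<in> SL2"
  shows "is_pushforward A \<mu> (pushforward_params A \<mu>)"
  unfolding is_pushforward_def
proof (intro allI impI)
  fix z assume den: "moeb_den A z \<noteq> 0"
  obtain a b c d where A: "A = (a, b, c, d)" by (cases A)
  obtain m0 m1 m2 where \<mu>: "\<mu> = (m0, m1, m2)" by (cases \<mu>)
  define q where "q = c * z + d"
  define w where "w = (a * z + b) / q"
  have "q \<noteq> 0" "a * d - b * c = 1"
    using den assms by (simp_all add: A q_def moeb_den_def SL2_def)
  then have "a - c * w = 1 / q" "d * w - b = z / q"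
    unfolding w_def q_def by (simp_all add: field_simps, algebra)
  then have "gckv_coeff (pushforward_params A \<mu>) w =
      m0 * (1 / q)\<^sup>2 + m1 * (z / q) * (1 / q) + m2 / 2 * (z / q)\<^sup>2"
    by (simp add: A \<mu> gckv_coeff_pushforward_params)
  also have "\<dots> = gckv_coeff \<mu> z / q\<^sup>2"
    using \<open>q \<noteq> 0\<close> by (simp add: \<mu> gckv_coeff_def field_simps power2_eq_square)
  finally have "gckv_coeff (pushforward_params A \<mu>) w = gckv_coeff \<mu> z / q\<^sup>2" .
  moreover have "deriv (moebius A) z = 1 / q\<^sup>2"
    using DERIV_imp_deriv[OF moebius_has_field_derivative[OF assms den]]
    by (simp add: A q_def moeb_den_def)
  ultimately show "gckv_coeff (pushforward_params A \<mu>) (moebius A z) =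
      deriv (moebius A) z * gckv_coeff \<mu> z"
    by (simp add: A w_def q_def moebius_def)
qed

lemma moebius_preimage:
  assumes "(a, b, c, d) \<in> SL2" "a - c * w \<noteq> 0"
  defines "z \<equiv> (d * w - b) / (a - c * w)"
  shows "moeb_den (a, b, c, d) z \<noteq> 0" "moebius (a, b, c, d) z = w"
proof -
  have det: "a * d - b * c = 1" using assms(1) by (simp add: SL2_def)
  have "c * z + d = 1 / (a - c * w)" "a * z + b = w / (a - c * w)"
    using det assms(2) unfolding z_def by (simp_all add: field_simps, algebra+)
  then show "moeb_den (a, b, c, d) z \<noteq> 0" "moebius (a, b, c, d) z = w"
    using assms(2) by (simp_all add: moeb_den_def moebius_def)
qed

lemma gckv_coeff_eqI:
  assumes "\<And>w. w \<noteq> w0 \<Longrightarrow> gckv_coeff \<mu> w = gckv_coeff \<nu> w"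
  shows "\<mu> = \<nu>"
proof -
  obtain m0 m1 m2 n0 n1 n2 where \<mu>: "\<mu> = (m0, m1, m2)" and \<nu>: "\<nu> = (n0, n1, n2)"
    by (cases \<mu>; cases \<nu>)
  have "m0 + m1 * (w0 + t) + m2 * (w0 + t)\<^sup>2 / 2 = n0 + n1 * (w0 + t) + n2 * (w0 + t)\<^sup>2 / 2"
    if "t \<noteq> 0" for t
    using assms[of "w0 + t"] that by (simp add: \<mu> \<nu> gckv_coeff_def)
  from this[of 1] this[of "- 1"] this[of 2] have "m2 = n2" "m1 = n1" "m0 = n0"
    by (simp_all add: field_simps, algebra+)
  then show ?thesis by (simp add: \<mu> \<nu>)
qed

lemma is_pushforward_unique:
  assumes "A \<in> SL2" "is_pushforward A \<mu> \<nu>"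
  shows "\<nu> = pushforward_params A \<mu>"
proof (cases A)
  case (fields a b c d)
  define w0 where "w0 = (if c = 0 then 0 else a / c)"
  have "a - c * w \<noteq> 0" if "w \<noteq> w0" for w
    using assms(1) that by (auto simp: fields SL2_def w0_def field_simps split: if_splits)
  then have "gckv_coeff \<nu> w = gckv_coeff (pushforward_params A \<mu>) w" if "w \<noteq> w0" for w
    using moebius_preimage[of a b c d w] assms is_pushforward_pushforward_params[OF assms(1)] that
    unfolding is_pushforward_def fields by metis
  then show ?thesis by (rule gckv_coeff_eqI)
qed

definition is_canonical :: "complex \<times> complex \<times> complex \<Rightarrow> bool" where
  "is_canonical \<nu> \<longleftrightarrow> (\<exists>\<nu>0. \<nu> = (\<nu>0, 0, 2))"

lemma pushforward_canonical_iff: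
  "A \<in> SL2 \<Longrightarrow> pushforward_canonical A \<mu> \<longleftrightarrow> is_canonical (pushforward_params A \<mu>)"
  unfolding pushforward_canonical_def is_canonical_def
  by (metis is_pushforward_unique is_pushforward_pushforward_params)

lemma is_canonical_pushforward_params_iff_Acal:
  assumes "B \<in> SL2"
  shows "is_canonical (pushforward_params B (K, 0, 2)) \<longleftrightarrow> B \<in> Acal K"
proof -
  obtain a b c d where B: "B = (a, b, c, d)" by (cases B)
  have det: "a * d - b * c = 1" using assms by (simp add: B SL2_def)
  have "is_canonical (pushforward_params B (K, 0, 2)) \<longleftrightarrow>
      b * d + K * a * c = 0 \<and> d\<^sup>2 + K * c\<^sup>2 = 1"
    by (auto simp: B is_canonical_def pushforward_params_def algebra_simps; algebra)
  \<comment> \<open>e.g. \<open>a = a (d\<^sup>2 + K c\<^sup>2) = d (1 + b c) + K a c\<^sup>2 = d + c (b d + K a c)\<close>\<close>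
  also have "\<dots> \<longleftrightarrow> a = d \<and> b = - c * K \<and> d\<^sup>2 + K * c\<^sup>2 = 1"
    using det by (auto simp: power2_eq_square, algebra+)
  also have "\<dots> \<longleftrightarrow> B \<in> Acal K"
    by (auto simp: B Acal_def mult.commute)
  finally show ?thesis .
qed

theorem corollary7p4:
  fixes \<mu>0 \<mu>1 \<mu>2 \<gamma> \<delta> :: complex
  assumes nontriv: "(\<mu>0, \<mu>1, \<mu>2) \<noteq> (0, 0, 0)"
    and cond: "\<delta>^2 * \<mu>2 / 2 - \<gamma> * \<delta> * \<mu>1 + \<gamma>^2 * \<mu>0 = 1"
  shows "{A \<in> SL2. pushforward_canonical A (\<mu>0, \<mu>1, \<mu>2)} =
     (\<lambda>B. mmul B ((\<delta> * \<mu>2 - \<gamma> * \<mu>1) / 2, \<delta> * \<mu>1 / 2 - \<gamma> * \<mu>0, \<gamma>, \<delta>))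
       ` Acal ((2 * \<mu>0 * \<mu>2 - \<mu>1^2) / 4)"
proof -
  define \<mu> where "\<mu> = (\<mu>0, \<mu>1, \<mu>2)"
  define A0 where "A0 = ((\<delta> * \<mu>2 - \<gamma> * \<mu>1) / 2, \<delta> * \<mu>1 / 2 - \<gamma> * \<mu>0, \<gamma>, \<delta>)"
  define K where "K = (2 * \<mu>0 * \<mu>2 - \<mu>1^2) / 4"
  have A0: "A0 \<in> SL2" "pushforward_params A0 \<mu> = (K, 0, 2)"
    using cond by (simp_all add: A0_def \<mu>_def K_def SL2_def pushforward_params_def
        field_simps power2_eq_square, algebra+)
  have "pushforward_canonical A \<mu> \<longleftrightarrow> mmul A (minv A0) \<in> Acal K" if "A \<in> SL2" for A
  proof -
    have "pushforward_params A \<mu> = pushforward_params (mmul (mmul A (minv A0)) A0) \<mu>"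
      using A0(1) by (simp add: mmul_assoc mmul_minv_left)
    also have "\<dots> = pushforward_params (mmul A (minv A0)) (K, 0, 2)"
      using A0(2) by (simp only: pushforward_params_mmul)
    finally show ?thesis
      using pushforward_canonical_iff[OF that] SL2_mmul[OF that SL2_minv[OF A0(1)]]
      by (simp add: is_canonical_pushforward_params_iff_Acal)
  qed
  then show ?thesis
    using image_mmul_right_SL2[OF A0(1) Acal_subset_SL2, of K]
    by (auto simp: \<mu>_def A0_def K_def)
qed

end
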